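(* Let $F$ and $p$ be positive integers. If $(d_1,d_2,\dots,d_p)$ is a $\mathrm{Sat}(F)$-sequence and $t_1,\dots,t_p$ are positive integers such that $t_1d_1+\cdots+t_pd_p<F$ and $\gcd\{d_i/d_{i+1},\,t_{i+1}\}=1$ for all $i\in\{1,\dots,p-1\}$, then $$\{d_1,\ t_1d_1+t_2d_2,\ \dots,\ t_1d_1+t_2d_2+\cdots+t_pd_p\}$$ is the minimal $\mathrm{Sat}(F)$-system of generators of an element of $\mathrm{Sat}(F)$ whose $\mathrm{Sat}(F)$-rank equals $p$. Moreover, every minimal $\mathrm{Sat}(F)$-system of generators of an element of $\mathrm{Sat}(F)$ with $\mathrm{Sat}(F)$-rank $p$ is of this form for some such $\mathrm{Sat}(F)$-sequence $(d_1,\dots,d_p)$ and positive integers $t_1,\dots,t_p$.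
   Context: A numerical semigroup is a subset $S\subseteq\mathbb{N}$ closed under addition, containing $0$, with $\mathbb{N}\setminus S$ finite; its Frobenius number $\mathrm{F}(S)$ is the largest integer not in $S$. For $A\subseteq\mathbb{N}$ and $a\in A$, let $\mathrm{d}_A(a)=\gcd\{x\in A\mid x\le a\}$. A numerical semigroup $S$ is saturated if $s+\mathrm{d}_S(s)\in S$ for all $s\in S\setminus\{0\}$. For a positive integer $F$, $\mathrm{Sat}(F)$ denotes the set of all saturated numerical semigroups $S$ with $\mathrm{F}(S)=F$. Let $\Delta(F+1)=\{0\}\cup\{x\in\mathbb{N}\mid x\ge F+1\}$. A set $X\subseteq\mathbb{N}$ is a $\mathrm{Sat}(F)$-set if $X\cap\Delta(F+1)=\emptyset$ and there exists $S\in\mathrm{Sat}(F)$ with $X\subseteq S$. For a $\mathrm{Sat}(F)$-set $X$, $\mathrm{Sat}(F)[X]$ denotes the intersection of all elements of $\mathrm{Sat}(F)$ containing $X$ (the smallest element of $\mathrm{Sat}(F)$ containing $X$). If $S=\mathrm{Sat}(F)[X]$, $X$ is a $\mathrm{Sat}(F)$-system of generators of $S$; it is minimal if $S\neq\mathrm{Sat}(F)[Y]$ for every proper subset $Y\subsetneq X$. Every $S\in\mathrm{Sat}(F)$ has a unique minimal $\mathrm{Sat}(F)$-system of generators, and its cardinality is the $\mathrm{Sat}(F)$-rank of $S$. For $k\ge1$, a $\mathrm{Sat}(F)$-sequence of length $k$ is a sequence of positive integers $(d_1,\dots,d_k)$ with $d_1>d_2>\cdots>d_k$, $d_{i+1}\mid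 d_i$ for all $i\in\{1,\dots,k-1\}$, and $d_k\nmid F$. *)

theory Defs
  imports Main
begin

definition numerical_semigroup :: "nat set \<Rightarrow> bool" where
  "numerical_semigroup S \<longleftrightarrow> 0 \<in> S \<and> (\<forall>x\<in>S. \<forall>y\<in>S. x + y \<in> S) \<and> finite (UNIV - S)"

definition frobenius :: "nat set \<Rightarrow> nat" where
  "frobenius S = Max (UNIV - S)"

definition dA :: "nat set \<Rightarrow> nat \<Rightarrow> nat" where
  "dA A a = Gcd {x \<in> A. x \<le> a}"

definition saturated :: "nat set \<Rightarrow> bool" where
  "saturated S \<longleftrightarrow> numerical_semigroup S \<and> (\<forall>s\<in>S - {0}. s + dA S s \<in> S)"

definition Sat :: "nat \<Rightarrow> nat set set" where
  "Sat F = {S. saturated S \<and> S \<noteq> UNIV \<and> frobenius S = F}"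

definition Delta :: "nat \<Rightarrow> nat set" where
  "Delta m = {0} \<union> {x. x \<ge> m}"

definition Sat_set :: "nat \<Rightarrow> nat set \<Rightarrow> bool" where
  "Sat_set F X \<longleftrightarrow> X \<inter> Delta (F + 1) = {} \<and> (\<exists>S\<in>Sat F. X \<subseteq> S)"

definition Sat_closure :: "nat \<Rightarrow> nat set \<Rightarrow> nat set" where
  "Sat_closure F X = \<Inter> {S \<in> Sat F. X \<subseteq> S}"

definition Sat_min_system :: "nat \<Rightarrow> nat set \<Rightarrow> nat set \<Rightarrow> bool" where
  "Sat_min_system F X S \<longleftrightarrow> Sat_set F X \<and> S = Sat_closure F X \<and>
     (\<forall>Y. Y \<subset> X \<longrightarrow> S \<noteq> Sat_closure F Y)"

definition Sat_rank :: "nat \<Rightarrow> nat set \<Rightarrow> nat" where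
  "Sat_rank F S = card (THE X. Sat_min_system F X S)"

definition Sat_sequence :: "nat \<Rightarrow> nat \<Rightarrow> (nat \<Rightarrow> nat) \<Rightarrow> bool" where
  "Sat_sequence F k d \<longleftrightarrow> k \<ge> 1 \<and> (\<forall>i\<in>{1..k}. d i > 0) \<and>
     (\<forall>i\<in>{1..<k}. d (Suc i) < d i \<and> d (Suc i) dvd d i) \<and> \<not> d k dvd F"

definition gen_set :: "nat \<Rightarrow> (nat \<Rightarrow> nat) \<Rightarrow> (nat \<Rightarrow> nat) \<Rightarrow> nat set" where
  "gen_set p d t = insert (d 1) ((\<lambda>k. \<Sum>j=1..k. t j * d j) ` {2..p})"

end

theory Submission
  imports Defs
begin

text \<open>For a \<open>Sat(F)\<close>-set \<open>X\<close>, the semigroup \<open>Sat(F)[X]\<close> consists of \<open>0\<close>, all integers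
  above \<open>F\<close>, and those \<open>s \<le> F\<close> that are at least some element of \<open>X\<close> and are divisible by
  \<open>gcd {x \<in> X. x \<le> s}\<close>: saturation forces all of these into every saturated semigroup
  containing \<open>X\<close>, and they already form one.  Hence \<open>X\<close> is a \<open>Sat(F)\<close>-set iff its elements lie
  strictly between \<open>0\<close> and \<open>F\<close> and \<open>gcd X\<close> does not divide \<open>F\<close>, and it is a minimal system iff no
  element is divisible by the gcd of the smaller ones; the minimal system is then recovered from
  the semigroup, so the rank is its cardinality.

  Listing such an \<open>X\<close> as \<open>a 1 < \<dots> < a p\<close>, the partial gcds \<open>d k = gcd (a 1, \<dots>, a k)\<close> form a
  strictly decreasing divisor chain with \<open>d p = gcd X\<close>, the increments are
  \<open>a (k+1) - a k = t (k+1) * d (k+1)\<close>, and the identity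
  \<open>d (k+1) = gcd (a k + t (k+1) * d (k+1)) (d k) = d (k+1) * gcd (d k div d (k+1)) (t (k+1))\<close>
  is exactly the coprimality condition.  Read backwards, the same computation shows that the
  partial sums of a \<open>Sat(F)\<close>-sequence satisfying it are independent with partial gcds \<open>d k\<close>.\<close>

section \<open>The smallest saturated semigroup with Frobenius number \<open>F\<close> containing \<open>X\<close>\<close>

definition Sat_hull :: "nat \<Rightarrow> nat set \<Rightarrow> nat set" where
  "Sat_hull F X = {s. s = 0 \<or> F < s \<or> ((\<exists>x\<in>X. x \<le> s) \<and> Gcd {x\<in>X. x \<le> s} dvd s)}"

lemma Gcd_dvd_Gcd_subset:
  fixes A B :: "'a::semiring_Gcd set"
  shows "A \<subseteq> B \<Longrightarrow> Gcd B dvd Gcd A"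
  by (auto simp: dvd_Gcd_iff intro: Gcd_dvd)

lemma Gcd_atMost_dvd_Gcd_atMost: "(s::nat) \<le> s' \<Longrightarrow> Gcd {x\<in>X. x \<le> s'} dvd Gcd {x\<in>X. x \<le> s}"
  by (rule Gcd_dvd_Gcd_subset) auto

lemma subset_Sat_hull: "X \<subseteq> Sat_hull F X"
  unfolding Sat_hull_def by (auto intro: Gcd_dvd)

lemma Gcd_atMost_dvd_Sat_hull:
  "c \<in> Sat_hull F X \<Longrightarrow> c \<le> s \<Longrightarrow> s \<le> F \<Longrightarrow> Gcd {x\<in>X. x \<le> s} dvd c"
  unfolding Sat_hull_def by (auto intro: dvd_trans[OF Gcd_atMost_dvd_Gcd_atMost])

lemma dA_Sat_hull:
  assumes "s \<in> Sat_hull F X" "s \<le> F"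
  shows "dA (Sat_hull F X) s = Gcd {x\<in>X. x \<le> s}"
proof (rule dvd_antisym)
  show "dA (Sat_hull F X) s dvd Gcd {x\<in>X. x \<le> s}"
    unfolding dA_def by (rule Gcd_dvd_Gcd_subset) (use subset_Sat_hull in auto)
  show "Gcd {x\<in>X. x \<le> s} dvd dA (Sat_hull F X) s"
    unfolding dA_def by (rule Gcd_greatest) (use Gcd_atMost_dvd_Sat_hull assms in auto)
qed

lemma Sat_hull_add_closed:
  assumes a: "a \<in> Sat_hull F X" and b: "b \<in> Sat_hull F X"
  shows "a + b \<in> Sat_hull F X"
proof (cases "a = 0 \<or> b = 0 \<or> F < a \<or> F < b")
  case True
  then show ?thesis using a b by (auto simp: Sat_hull_def)
next
  case False
  with a b obtain x where "x \<in> X" "x \<le> a"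
    and "Gcd {x\<in>X. x \<le> a} dvd a" "Gcd {x\<in>X. x \<le> b} dvd b"
    by (auto simp: Sat_hull_def)
  moreover have "Gcd {x\<in>X. x \<le> a + b} dvd Gcd {x\<in>X. x \<le> a}"
    and "Gcd {x\<in>X. x \<le> a + b} dvd Gcd {x\<in>X. x \<le> b}"
    by (simp_all add: Gcd_atMost_dvd_Gcd_atMost)
  ultimately have "x \<in> X" "x \<le> a + b" "Gcd {x\<in>X. x \<le> a + b} dvd a + b"
    by (auto intro: dvd_add dvd_trans)
  then show ?thesis unfolding Sat_hull_def by blast
qed

lemma numerical_semigroup_Sat_hull: "numerical_semigroup (Sat_hull F X)"
  unfolding numerical_semigroup_def
proof (intro conjI ballI Sat_hull_add_closed)
  show "0 \<in> Sat_hull F X" by (simp add: Sat_hull_def)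
  show "finite (UNIV - Sat_hull F X)"
    by (rule finite_subset[of _ "{..F}"]) (auto simp: Sat_hull_def)
qed

lemma saturated_Sat_hull: "saturated (Sat_hull F X)"
  unfolding saturated_def
proof (intro conjI numerical_semigroup_Sat_hull ballI)
  fix s assume s: "s \<in> Sat_hull F X - {0}"
  show "s + dA (Sat_hull F X) s \<in> Sat_hull F X"
  proof (cases "F < s")
    case True
    then show ?thesis by (auto simp: Sat_hull_def)
  next
    case False
    with s obtain x where x: "x \<in> X" "x \<le> s" and gs: "Gcd {x\<in>X. x \<le> s} dvd s"
      by (auto simp: Sat_hull_def)
    let ?s' = "s + Gcd {x\<in>X. x \<le> s}"
    have "Gcd {x\<in>X. x \<le> ?s'} dvd ?s'"
      using Gcd_atMost_dvd_Gcd_atMost[of s ?s' X] gs by (auto intro: dvd_trans)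
    moreover have "x \<le> ?s'" using x by simp
    ultimately have "?s' \<in> Sat_hull F X"
      using x unfolding Sat_hull_def by blast
    moreover have "dA (Sat_hull F X) s = Gcd {x\<in>X. x \<le> s}"
      using s False by (intro dA_Sat_hull) auto
    ultimately show ?thesis by (simp only:)
  qed
qed

lemma frobenius_notin:
  assumes "numerical_semigroup T" "T \<noteq> UNIV"
  shows "frobenius T \<notin> T"
  using Max_in[of "UNIV - T"] assms unfolding frobenius_def numerical_semigroup_def by auto

lemma greater_frobenius_in:
  assumes "numerical_semigroup T" "frobenius T < s"
  shows "s \<in> T"
proof (rule ccontr)
  assume "s \<notin> T"
  then have "s \<le> Max (UNIV - T)"
    using assms(1) by (intro Max_ge) (auto simp: numerical_semigroup_def)
  then show False using assms(2) by (simp add: frobenius_def)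
qed

lemma Sat_hull_in_Sat:
  assumes "F \<notin> Sat_hull F X"
  shows "Sat_hull F X \<in> Sat F"
proof -
  have "frobenius (Sat_hull F X) = F"
    unfolding frobenius_def
  proof (rule Max_eqI)
    show "finite (UNIV - Sat_hull F X)"
      using numerical_semigroup_Sat_hull by (simp add: numerical_semigroup_def)
  qed (use assms in \<open>auto simp: Sat_hull_def\<close>)
  then show ?thesis using assms saturated_Sat_hull by (auto simp: Sat_def)
qed

text \<open>In a saturated semigroup one can climb from \<open>y\<close> in steps of \<open>dA T y\<close>, since
  \<open>dA T\<close> only shrinks (in the divisibility order) along the way.\<close>

lemma saturated_climb:
  assumes "saturated T" "y \<in> T" "0 < y" "y \<le> m" "dA T y dvd m - y"
  shows "m \<in> T"
  using assms(2-)
proof (induction "m - y" arbitrary: y rule: less_induct)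
  case less
  show ?case
  proof (cases "m = y")
    case True
    then show ?thesis using less by simp
  next
    case False
    let ?D = "dA T y"
    have "?D dvd y" unfolding dA_def using less(2) by (auto intro: Gcd_dvd)
    then have "?D > 0" using less(3) by (cases "?D = 0") auto
    have "y + ?D \<in> T" using assms(1) less(2,3) unfolding saturated_def by auto
    have "?D \<le> m - y" using less(4,5) False by (simp add: dvd_imp_le)
    have "dA T (y + ?D) dvd ?D" unfolding dA_def by (rule Gcd_dvd_Gcd_subset) auto
    moreover have "?D dvd m - (y + ?D)"
      using less(5) \<open>?D \<le> m - y\<close> by (metis diff_diff_left dvd_diff_nat dvd_refl)
    ultimately have "dA T (y + ?D) dvd m - (y + ?D)" by (rule dvd_trans)
    then show ?thesis
      using less(1)[of "y + ?D"] \<open>y + ?D \<in> T\<close> \<open>?D > 0\<close> \<open>?D \<le> m - y\<close> less(4) by auto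
  qed
qed

lemma Sat_hull_subset:
  assumes T: "T \<in> Sat F" and XT: "X \<subseteq> T" and X0: "0 \<notin> X"
  shows "Sat_hull F X \<subseteq> T"
proof
  fix s assume s: "s \<in> Sat_hull F X"
  have sat: "saturated T" and ns: "numerical_semigroup T" and fr: "frobenius T = F"
    using T by (auto simp: Sat_def saturated_def)
  show "s \<in> T"
  proof (cases "s = 0 \<or> F < s")
    case True
    then show ?thesis
      using greater_frobenius_in[OF ns] fr ns by (auto simp: numerical_semigroup_def)
  next
    case False
    then obtain x where x: "x \<in> X" "x \<le> s" and gs: "Gcd {x\<in>X. x \<le> s} dvd s"
      using s by (auto simp: Sat_hull_def)
    define y where "y = Max {x\<in>X. x \<le> s}"
    have "y \<in> {x\<in>X. x \<le> s}" unfolding y_def by (rule Max_in) (use x in auto)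
    then have y: "y \<in> X" "y \<le> s" by auto
    have "{x\<in>X. x \<le> y} = {x\<in>X. x \<le> s}"
      using Max_ge[of "{x\<in>X. x \<le> s}"] y unfolding y_def by fastforce
    moreover have "dA T y dvd Gcd {x\<in>X. x \<le> y}"
      unfolding dA_def by (rule Gcd_dvd_Gcd_subset) (use XT in auto)
    moreover have "Gcd {x\<in>X. x \<le> s} dvd s - y"
      using gs y by (auto intro: dvd_diff_nat Gcd_dvd)
    ultimately have "dA T y dvd s - y" by (auto intro: dvd_trans)
    moreover have "0 < y" using y X0 by (cases y) auto
    ultimately show ?thesis using saturated_climb[OF sat] y XT by auto
  qed
qed

lemma F_in_Sat_hull_iff:
  assumes "\<forall>x\<in>X. x < F"
  shows "F \<in> Sat_hull F X \<longleftrightarrow> Gcd X dvd F"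
proof (cases "F = 0")
  case True
  then show ?thesis by (simp add: Sat_hull_def)
next
  case False
  have "{x\<in>X. x \<le> F} = X" using assms by auto
  moreover have "(\<exists>x\<in>X. x \<le> F) \<longleftrightarrow> X \<noteq> {}" using assms less_imp_le by blast
  moreover have "Gcd X dvd F \<Longrightarrow> X \<noteq> {}" using False by auto
  ultimately show ?thesis using False by (auto simp: Sat_hull_def)
qed

lemma Sat_set_iff: "Sat_set F X \<longleftrightarrow> (\<forall>x\<in>X. 0 < x \<and> x < F) \<and> \<not> Gcd X dvd F"
proof
  assume "Sat_set F X"
  then obtain T where T: "T \<in> Sat F" "X \<subseteq> T" and D: "X \<inter> Delta (F + 1) = {}"
    unfolding Sat_set_def by auto
  have "F \<notin> T" using T(1) frobenius_notin unfolding Sat_def saturated_def by blast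
  have X: "\<forall>x\<in>X. 0 < x \<and> x < F"
  proof
    fix x assume "x \<in> X"
    then have "x \<noteq> F" "x \<notin> Delta (F + 1)" using T(2) D \<open>F \<notin> T\<close> by auto
    then show "0 < x \<and> x < F" by (auto simp: Delta_def)
  qed
  then have "0 \<notin> X" by blast
  then have "F \<notin> Sat_hull F X" using Sat_hull_subset[OF T] \<open>F \<notin> T\<close> by blast
  with X show "(\<forall>x\<in>X. 0 < x \<and> x < F) \<and> \<not> Gcd X dvd F"
    using F_in_Sat_hull_iff by blast
next
  assume X: "(\<forall>x\<in>X. 0 < x \<and> x < F) \<and> \<not> Gcd X dvd F"
  then have "Sat_hull F X \<in> Sat F" using F_in_Sat_hull_iff Sat_hull_in_Sat by blast
  moreover have "X \<inter> Delta (F + 1) = {}" using X by (auto simp: Delta_def)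
  ultimately show "Sat_set F X" using subset_Sat_hull unfolding Sat_set_def by blast
qed

lemma Sat_hull_in_Sat_if_Sat_set: "Sat_set F X \<Longrightarrow> Sat_hull F X \<in> Sat F"
  by (intro Sat_hull_in_Sat) (simp add: Sat_set_iff F_in_Sat_hull_iff)

lemma Sat_closure_eq_Sat_hull:
  assumes "Sat_set F X"
  shows "Sat_closure F X = Sat_hull F X"
  unfolding Sat_closure_def
proof (rule antisym)
  show "\<Inter> {S \<in> Sat F. X \<subseteq> S} \<subseteq> Sat_hull F X"
    using Sat_hull_in_Sat_if_Sat_set[OF assms] subset_Sat_hull by (intro Inter_lower) auto
  have "0 \<notin> X" using assms by (auto simp: Sat_set_iff)
  then show "Sat_hull F X \<subseteq> \<Inter> {S \<in> Sat F. X \<subseteq> S}"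
    using Sat_hull_subset by (intro Inter_greatest) auto
qed

section \<open>Minimal systems of generators\<close>

definition gcd_independent :: "nat set \<Rightarrow> bool" where
  "gcd_independent X \<longleftrightarrow> (\<forall>x\<in>X. \<not> Gcd {y\<in>X. y < x} dvd x)"

lemma gcd_independent_subset:
  assumes "gcd_independent X" "Y \<subseteq> X"
  shows "gcd_independent Y"
  unfolding gcd_independent_def
proof
  fix y assume "y \<in> Y"
  then have "\<not> Gcd {x\<in>X. x < y} dvd y" using assms unfolding gcd_independent_def by blast
  moreover have "Gcd {x\<in>X. x < y} dvd Gcd {x\<in>Y. x < y}"
    using assms(2) by (intro Gcd_dvd_Gcd_subset) blast
  ultimately show "\<not> Gcd {x\<in>Y. x < y} dvd y" by (blast intro: dvd_trans)
qed

lemma Gcd_less_Sat_hull: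
  assumes "s \<le> F"
  shows "Gcd {c\<in>Sat_hull F X. c < s} = Gcd {x\<in>X. x < s}"
proof (rule dvd_antisym)
  show "Gcd {c\<in>Sat_hull F X. c < s} dvd Gcd {x\<in>X. x < s}"
    by (rule Gcd_dvd_Gcd_subset) (use subset_Sat_hull in auto)
  show "Gcd {x\<in>X. x < s} dvd Gcd {c\<in>Sat_hull F X. c < s}"
  proof (rule Gcd_greatest)
    fix c assume c: "c \<in> {c\<in>Sat_hull F X. c < s}"
    show "Gcd {x\<in>X. x < s} dvd c"
    proof (cases "c = 0")
      case False
      with c assms have "Gcd {x\<in>X. x \<le> c} dvd c" by (auto simp: Sat_hull_def)
      moreover have "Gcd {x\<in>X. x < s} dvd Gcd {x\<in>X. x \<le> c}"
        by (rule Gcd_dvd_Gcd_subset) (use c in auto)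
      ultimately show ?thesis by (blast intro: dvd_trans)
    qed simp
  qed
qed

text \<open>An independent system is recovered from its hull, which makes minimal systems unique.\<close>

lemma Sat_hull_generators:
  assumes X: "\<forall>x\<in>X. 0 < x \<and> x < F" and ind: "gcd_independent X"
  shows "{s\<in>Sat_hull F X. 0 < s \<and> s < F \<and> \<not> Gcd {c\<in>Sat_hull F X. c < s} dvd s} = X"
    (is "?G = X")
proof (intro equalityI subsetI)
  fix s assume "s \<in> ?G"
  then have s: "s \<in> Sat_hull F X" "0 < s" "s < F"
    and "\<not> Gcd {c\<in>Sat_hull F X. c < s} dvd s" by auto
  then have nd: "\<not> Gcd {x\<in>X. x < s} dvd s" using Gcd_less_Sat_hull[of s F X] by simp
  from s have dvd: "Gcd {x\<in>X. x \<le> s} dvd s" by (simp add: Sat_hull_def)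
  show "s \<in> X"
  proof (rule ccontr)
    assume "s \<notin> X"
    then have "{x\<in>X. x \<le> s} = {x\<in>X. x < s}" by (auto simp: le_less)
    with dvd nd show False by simp
  qed
next
  fix s assume s: "s \<in> X"
  then have "0 < s" "s < F" using X by auto
  moreover have "\<not> Gcd {c\<in>Sat_hull F X. c < s} dvd s"
    using ind s Gcd_less_Sat_hull[of s F X] \<open>s < F\<close> unfolding gcd_independent_def by simp
  moreover have "s \<in> Sat_hull F X" using s subset_Sat_hull by blast
  ultimately show "s \<in> ?G" by blast
qed

lemma Sat_hull_Diff_redundant:
  assumes x: "x \<in> X" and red: "Gcd {y\<in>X. y < x} dvd x" and X0: "0 \<notin> X"
  shows "Sat_hull F (X - {x}) = Sat_hull F X"
proof -
  have "{y\<in>X. y < x} \<noteq> {}" using red x X0 by (metis Gcd_empty dvd_0_left)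
  then obtain z where z: "z \<in> X" "z < x" by auto
  have "((\<exists>y\<in>X-{x}. y \<le> s) \<and> Gcd {y\<in>X-{x}. y \<le> s} dvd s) \<longleftrightarrow>
        ((\<exists>y\<in>X. y \<le> s) \<and> Gcd {y\<in>X. y \<le> s} dvd s)" for s
  proof (cases "s < x")
    case True
    then have "{y\<in>X-{x}. y \<le> s} = {y\<in>X. y \<le> s}" by auto
    then show ?thesis by auto
  next
    case False
    let ?A = "{y\<in>X-{x}. y \<le> s}"
    have "Gcd ?A dvd Gcd {y\<in>X. y < x}" by (rule Gcd_dvd_Gcd_subset) (use False in auto)
    then have "Gcd ?A dvd x" using red by (rule dvd_trans)
    moreover have "{y\<in>X. y \<le> s} = insert x ?A" using False x by auto
    ultimately have "Gcd {y\<in>X. y \<le> s} = Gcd ?A" by (simp add: gcd_proj2_if_dvd_nat)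
    moreover have "z \<in> X - {x}" "z \<le> s" using z False by auto
    ultimately show ?thesis using x False by auto
  qed
  then show ?thesis unfolding Sat_hull_def by simp
qed

lemma Sat_min_system_iff:
  "Sat_min_system F X S \<longleftrightarrow> Sat_set F X \<and> gcd_independent X \<and> S = Sat_hull F X"
proof
  assume min: "Sat_min_system F X S"
  then have X: "Sat_set F X" and S: "S = Sat_hull F X"
    by (auto simp: Sat_min_system_def Sat_closure_eq_Sat_hull)
  have X0: "0 \<notin> X" using X by (auto simp: Sat_set_iff)
  have "gcd_independent X"
    unfolding gcd_independent_def
  proof (intro ballI notI)
    fix x assume x: "x \<in> X" "Gcd {y\<in>X. y < x} dvd x"
    have "Sat_set F (X - {x})" using X unfolding Sat_set_def by blast
    then have "Sat_closure F (X - {x}) = S"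
      using Sat_hull_Diff_redundant[OF x X0] S by (simp add: Sat_closure_eq_Sat_hull)
    moreover have "X - {x} \<subset> X" using x(1) by blast
    ultimately show False using min unfolding Sat_min_system_def by blast
  qed
  with X S show "Sat_set F X \<and> gcd_independent X \<and> S = Sat_hull F X" by blast
next
  assume "Sat_set F X \<and> gcd_independent X \<and> S = Sat_hull F X"
  then have X: "Sat_set F X" "gcd_independent X" and S: "S = Sat_hull F X" by auto
  have "S \<noteq> Sat_closure F Y" if "Y \<subset> X" for Y
  proof
    assume S_Y: "S = Sat_closure F Y"
    have "Y \<subseteq> X" using \<open>Y \<subset> X\<close> by (rule psubset_imp_subset)
    then have Y: "Sat_set F Y" "gcd_independent Y"
      using X gcd_independent_subset unfolding Sat_set_def by blast+
    then have "Sat_hull F Y = Sat_hull F X" using S S_Y by (simp add: Sat_closure_eq_Sat_hull)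
    moreover have "\<forall>x\<in>X. 0 < x \<and> x < F" "\<forall>y\<in>Y. 0 < y \<and> y < F"
      using X(1) Y(1) by (simp_all add: Sat_set_iff)
    ultimately have "Y = X"
      using Sat_hull_generators[of X F] Sat_hull_generators[of Y F] X(2) Y(2) by simp
    then show False using \<open>Y \<subset> X\<close> by blast
  qed
  moreover have "S = Sat_closure F X" using S X(1) by (simp add: Sat_closure_eq_Sat_hull)
  ultimately show "Sat_min_system F X S" using X(1) unfolding Sat_min_system_def by blast
qed

lemma Sat_min_system_unique:
  assumes "Sat_min_system F X S" "Sat_min_system F Y S"
  shows "X = Y"
proof -
  have X: "\<forall>x\<in>X. 0 < x \<and> x < F" "gcd_independent X" "S = Sat_hull F X"
    and Y: "\<forall>y\<in>Y. 0 < y \<and> y < F" "gcd_independent Y" "S = Sat_hull F Y"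
    using assms by (simp_all add: Sat_min_system_iff Sat_set_iff)
  show ?thesis using Sat_hull_generators[OF X(1,2)] Sat_hull_generators[OF Y(1,2)] X(3) Y(3) by simp
qed

lemma Sat_rank_eq_card:
  assumes "Sat_min_system F X S"
  shows "Sat_rank F S = card X"
  using the_equality[of "\<lambda>X. Sat_min_system F X S", OF assms Sat_min_system_unique[OF _ assms]]
  by (simp add: Sat_rank_def)

section \<open>Divisor chains and their partial sums\<close>

lemma strict_mono_on_atLeastAtMost_SucI:
  fixes a :: "nat \<Rightarrow> 'a::order"
  assumes "\<And>k. m \<le> k \<Longrightarrow> Suc k \<le> n \<Longrightarrow> a k < a (Suc k)"
  shows "strict_mono_on {m..n} a"
proof (rule strict_mono_onI)
  fix i j assume "i \<in> {m..n}" "j \<in> {m..n}" "i < j"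
  then have "Suc i \<le> j" "j \<le> n" "m \<le> i" by auto
  then show "a i < a j"
  proof (induction j rule: dec_induct)
    case base
    then show ?case using assms by simp
  next
    case (step k)
    then have "a i < a k" "a k < a (Suc k)" using assms[of k] by auto
    then show ?case by (rule less_trans)
  qed
qed

lemma strict_mono_on_image_less:
  fixes a :: "nat \<Rightarrow> nat"
  assumes "strict_mono_on {1..p} a" "k \<in> {1..p}"
  shows "{y \<in> a ` {1..p}. y < a k} = a ` {1..<k}"
proof -
  have "a j < a k \<longleftrightarrow> j < k" if "j \<in> {1..p}" for j
    using strict_mono_on_less[OF assms(1) that assms(2)] .
  then show ?thesis using assms(2) by force
qed

lemma Gcd_image_atLeastAtMost_Suc:
  fixes a :: "nat \<Rightarrow> nat"
  shows "Gcd (a ` {1..Suc k}) = gcd (a (Suc k)) (Gcd (a ` {1..k}))"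
proof -
  have "{1..Suc k} = insert (Suc k) {1..k}" by auto
  then show ?thesis by simp
qed

lemma gcd_independent_image_iff:
  assumes mono: "strict_mono_on {1..p} a" and "0 < a 1"
  shows "gcd_independent (a ` {1..p}) \<longleftrightarrow> (\<forall>k\<in>{1..<p}. \<not> Gcd (a ` {1..k}) dvd a (Suc k))"
proof -
  have "gcd_independent (a ` {1..p}) \<longleftrightarrow> (\<forall>k\<in>{1..p}. \<not> Gcd (a ` {1..<k}) dvd a k)"
    unfolding gcd_independent_def using strict_mono_on_image_less[OF mono] by simp
  also have "\<dots> \<longleftrightarrow> (\<forall>k\<in>{1..<p}. \<not> Gcd (a ` {1..k}) dvd a (Suc k))"
  proof (intro iffI ballI)
    fix k assume "\<forall>k\<in>{1..p}. \<not> Gcd (a ` {1..<k}) dvd a k" "k \<in> {1..<p}"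
    then have "\<not> Gcd (a ` {1..<Suc k}) dvd a (Suc k)" by simp
    then show "\<not> Gcd (a ` {1..k}) dvd a (Suc k)"
      by (simp add: atLeastLessThanSuc_atLeastAtMost)
  next
    fix k assume step: "\<forall>k\<in>{1..<p}. \<not> Gcd (a ` {1..k}) dvd a (Suc k)" and "k \<in> {1..p}"
    show "\<not> Gcd (a ` {1..<k}) dvd a k"
    proof (cases "k = 1")
      case True
      then show ?thesis using \<open>0 < a 1\<close> by simp
    next
      case False
      then obtain j where "k = Suc j" "j \<in> {1..<p}" using \<open>k \<in> {1..p}\<close> by (cases k) auto
      then show ?thesis using step by (simp add: atLeastLessThanSuc_atLeastAtMost)
    qed
  qed
  finally show ?thesis .
qed

lemma gcd_add_mult_dvd_chain:
  fixes e D s t :: nat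
  assumes "0 < e" "e dvd D" "D dvd s"
  shows "gcd (s + t * e) D = e * gcd (D div e) t"
proof -
  obtain q where q: "D = e * q" using assms(2) by blast
  obtain m where m: "s = D * m" using assms(3) by blast
  have "gcd (s + t * e) D = gcd (t * e) D" unfolding m
    by (metis add.commute gcd.commute gcd_add_mult mult.commute)
  also have "\<dots> = e * gcd t q" unfolding q by (simp add: gcd_mult_distrib_nat mult.commute)
  finally show ?thesis using q assms(1) by (simp add: gcd.commute)
qed

definition divisor_chain :: "nat \<Rightarrow> (nat \<Rightarrow> nat) \<Rightarrow> bool" where
  "divisor_chain p d \<longleftrightarrow>
     (\<forall>i\<in>{1..p}. 0 < d i) \<and> (\<forall>i\<in>{1..<p}. d (Suc i) < d i \<and> d (Suc i) dvd d i)"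

lemma Sat_sequence_iff: "Sat_sequence F p d \<longleftrightarrow> 1 \<le> p \<and> divisor_chain p d \<and> \<not> d p dvd F"
  unfolding Sat_sequence_def divisor_chain_def by auto

lemma divisor_chain_dvd:
  assumes "divisor_chain p d" "1 \<le> j" "j \<le> k" "k \<le> p"
  shows "d k dvd d j"
  using assms(3,4)
proof (induction k rule: dec_induct)
  case (step k)
  then have "d (Suc k) dvd d k" using assms(1,2) by (simp add: divisor_chain_def)
  with step show ?case by (auto intro: dvd_trans)
qed simp

text \<open>As in the paper, the first generator is \<open>d 1\<close>, not \<open>t 1 * d 1\<close>.\<close>

definition gen_seq :: "(nat \<Rightarrow> nat) \<Rightarrow> (nat \<Rightarrow> nat) \<Rightarrow> nat \<Rightarrow> nat" where
  "gen_seq d t k = (if k = 1 then d 1 else \<Sum>j=1..k. t j * d j)"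

lemma gen_set_eq_image: "0 < p \<Longrightarrow> gen_set p d t = gen_seq d t ` {1..p}"
proof -
  assume "0 < p"
  then have "{1..p} = insert 1 {2..p}" by auto
  then show ?thesis unfolding gen_set_def by (auto simp: gen_seq_def)
qed

lemma gen_seq_Suc: "0 < k \<Longrightarrow> gen_seq d t (Suc k) = (\<Sum>j=1..k. t j * d j) + t (Suc k) * d (Suc k)"
  by (simp add: gen_seq_def)

lemma gen_seq_le_sum: "0 < t 1 \<Longrightarrow> 1 \<le> k \<Longrightarrow> gen_seq d t k \<le> (\<Sum>j=1..k. t j * d j)"
  by (auto simp: gen_seq_def)

lemma strict_mono_on_gen_seq:
  assumes "divisor_chain p d" "\<forall>i\<in>{1..p}. 0 < t i"
  shows "strict_mono_on {1..p} (gen_seq d t)"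
proof (rule strict_mono_on_atLeastAtMost_SucI)
  fix k assume k: "1 \<le> k" "Suc k \<le> p"
  then have "0 < t (Suc k) * d (Suc k)" "0 < t 1"
    using assms by (auto simp: divisor_chain_def)
  then show "gen_seq d t k < gen_seq d t (Suc k)"
    using gen_seq_le_sum[of t k d] gen_seq_Suc[of k d t] k by linarith
qed

lemma Gcd_gen_seq:
  assumes d: "divisor_chain p d" and coprime: "\<forall>i\<in>{1..<p}. gcd (d i div d (Suc i)) (t (Suc i)) = 1"
    and "1 \<le> k" "k \<le> p"
  shows "Gcd (gen_seq d t ` {1..k}) = d k"
  using assms(3,4)
proof (induction k rule: dec_induct)
  case base
  then show ?case by (simp add: gen_seq_def)
next
  case (step k)
  have "d (Suc k) dvd d k" "0 < d (Suc k)" using d step by (auto simp: divisor_chain_def)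
  moreover have "d k dvd (\<Sum>j=1..k. t j * d j)"
    using divisor_chain_dvd[OF d] step by (auto intro!: dvd_sum)
  ultimately have "Gcd (gen_seq d t ` {1..Suc k}) = d (Suc k) * gcd (d k div d (Suc k)) (t (Suc k))"
    unfolding Gcd_image_atLeastAtMost_Suc using step gen_seq_Suc[of k d t]
    by (simp add: gcd_add_mult_dvd_chain)
  then show ?case using coprime step by simp
qed

lemma gcd_independent_gen_set:
  assumes d: "divisor_chain p d" and t: "\<forall>i\<in>{1..p}. 0 < t i"
    and coprime: "\<forall>i\<in>{1..<p}. gcd (d i div d (Suc i)) (t (Suc i)) = 1" and "0 < p"
  shows "gcd_independent (gen_set p d t)"
proof -
  have "\<not> Gcd (gen_seq d t ` {1..k}) dvd gen_seq d t (Suc k)" if k: "k \<in> {1..<p}" for k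
  proof
    assume "Gcd (gen_seq d t ` {1..k}) dvd gen_seq d t (Suc k)"
    moreover have "d (Suc k) = gcd (gen_seq d t (Suc k)) (Gcd (gen_seq d t ` {1..k}))"
      using Gcd_gen_seq[OF d coprime, of "Suc k"] k unfolding Gcd_image_atLeastAtMost_Suc by simp
    ultimately have "d (Suc k) = d k"
      using Gcd_gen_seq[OF d coprime, of k] k by (simp add: gcd_proj2_if_dvd_nat)
    moreover have "d (Suc k) < d k" using d k by (simp add: divisor_chain_def)
    ultimately show False by simp
  qed
  moreover have "0 < gen_seq d t 1" using d \<open>0 < p\<close> by (simp add: gen_seq_def divisor_chain_def)
  ultimately show ?thesis
    using gcd_independent_image_iff[OF strict_mono_on_gen_seq[OF d t]] gen_set_eq_image \<open>0 < p\<close>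
    by simp
qed

lemma finite_strict_mono_enumeration:
  fixes X :: "'a::linorder set"
  assumes "finite X" "card X = p"
  obtains a where "strict_mono_on {1..p} a" "a ` {1..p} = X"
proof
  define xs where "xs = sorted_list_of_set X"
  have len: "length xs = p" and set: "set xs = X" and sorted: "sorted_wrt (<) xs"
    using assms unfolding xs_def by (simp_all add: strict_sorted_list_of_set)
  show "strict_mono_on {1..p} (\<lambda>k. xs ! (k - 1))"
  proof (rule strict_mono_onI)
    fix j k assume "j \<in> {1..p}" "k \<in> {1..p}" "j < k"
    then show "xs ! (j - 1) < xs ! (k - 1)" using sorted_wrt_nth_less[OF sorted] len by simp
  qed
  have "{1..p} = Suc ` {0..<p}" using image_Suc_lessThan[of p] by (simp add: lessThan_atLeast0)
  then have "(\<lambda>k. xs ! (k - 1)) ` {1..p} = nth xs ` {0..<p}" by (simp only: image_image diff_Suc_1)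
  then show "(\<lambda>k. xs ! (k - 1)) ` {1..p} = X" using len set by (simp add: nth_image)
qed

lemma divisor_chain_partial_Gcd:
  fixes a :: "nat \<Rightarrow> nat"
  assumes mono: "strict_mono_on {1..p} a" and "0 < a 1" and ind: "gcd_independent (a ` {1..p})"
  shows "divisor_chain p (\<lambda>k. Gcd (a ` {1..k}))"
  unfolding divisor_chain_def
proof (intro conjI ballI)
  fix k assume "k \<in> {1..p}"
  then have "Gcd (a ` {1..k}) dvd a 1" by (intro Gcd_dvd) auto
  then show "0 < Gcd (a ` {1..k})" using \<open>0 < a 1\<close> by (metis dvd_0_left_iff neq0_conv)
next
  fix k assume k: "k \<in> {1..<p}"
  let ?G = "Gcd (a ` {1..k})"
  have "\<not> ?G dvd a (Suc k)"
    using ind k gcd_independent_image_iff[OF mono \<open>0 < a 1\<close>] by blast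
  then have "gcd (a (Suc k)) ?G \<noteq> ?G" by (metis gcd_dvd1)
  moreover have "?G dvd a 1" using k by (intro Gcd_dvd) auto
  then have "0 < ?G" using \<open>0 < a 1\<close> by (metis dvd_0_left_iff gr0I less_irrefl)
  ultimately show "Gcd (a ` {1..Suc k}) < ?G"
    unfolding Gcd_image_atLeastAtMost_Suc using dvd_imp_le[of "gcd (a (Suc k)) ?G" ?G]
    by (simp add: order_less_le)
  show "Gcd (a ` {1..Suc k}) dvd ?G" unfolding Gcd_image_atLeastAtMost_Suc by simp
qed

lemma partial_Gcd_increments:
  fixes a :: "nat \<Rightarrow> nat"
  assumes mono: "strict_mono_on {1..p} a"
  obtains t where "\<forall>i\<in>{1..p}. 0 < t i"
    and "\<forall>k\<in>{1..p}. (\<Sum>i=1..k. t i * Gcd (a ` {1..i})) = a k"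
proof
  define D where "D k = Gcd (a ` {1..k})" for k
  define t where "t k = (if k = 1 then 1 else (a k - a (k - 1)) div D k)" for k
  have increment: "a (Suc k) = a k + t (Suc k) * D (Suc k)" if "1 \<le> k" "Suc k \<le> p" for k
  proof -
    have "D (Suc k) dvd a (Suc k)" "D (Suc k) dvd a k" unfolding D_def using that by auto
    then have "t (Suc k) * D (Suc k) = a (Suc k) - a k" unfolding t_def using that by simp
    moreover have "a k < a (Suc k)" using that by (intro strict_mono_onD[OF mono]) auto
    ultimately show ?thesis by simp
  qed
  show "\<forall>i\<in>{1..p}. 0 < t i"
  proof
    fix i assume i: "i \<in> {1..p}"
    show "0 < t i"
    proof (cases "i = 1")
      case False
      then obtain k where "i = Suc k" "1 \<le> k" using i by (cases i) auto
      moreover have "a k < a (Suc k)"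
        using i \<open>i = Suc k\<close> \<open>1 \<le> k\<close> by (intro strict_mono_onD[OF mono]) auto
      ultimately show ?thesis using increment[of k] i by (cases "t i = 0") auto
    qed (simp add: t_def)
  qed
  have "(\<Sum>i=1..k. t i * D i) = a k" if "1 \<le> k" "k \<le> p" for k
    using that
  proof (induction k rule: dec_induct)
    case base
    then show ?case by (simp add: t_def D_def)
  next
    case (step n)
    then show ?case using increment[of n] by simp
  qed
  then show "\<forall>k\<in>{1..p}. (\<Sum>i=1..k. t i * Gcd (a ` {1..i})) = a k" by (simp add: D_def)
qed

lemma gcd_independent_obtain_gen_set:
  assumes "finite X" "card X = p" "0 < p" "0 \<notin> X" "gcd_independent X"
  obtains d t where "divisor_chain p d" "\<forall>i\<in>{1..p}. 0 < t i"
    and "\<forall>i\<in>{1..<p}. gcd (d i div d (Suc i)) (t (Suc i)) = 1"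
    and "X = gen_set p d t" "d p = Gcd X" "(\<Sum>i=1..p. t i * d i) \<in> X"
proof -
  obtain a where mono: "strict_mono_on {1..p} a" and X: "a ` {1..p} = X"
    using finite_strict_mono_enumeration assms(1,2) by blast
  define d where "d k = Gcd (a ` {1..k})" for k
  have "a 1 \<in> X" using X assms(3) by auto
  with assms(4) have "0 < a 1" by (metis gr0I)
  then have chain: "divisor_chain p d"
    unfolding d_def using divisor_chain_partial_Gcd mono X assms(5) by blast
  obtain t where t: "\<forall>i\<in>{1..p}. 0 < t i" and sums: "\<forall>k\<in>{1..p}. (\<Sum>i=1..k. t i * d i) = a k"
    using partial_Gcd_increments[OF mono] unfolding d_def by blast
  have "gcd (d i div d (Suc i)) (t (Suc i)) = 1" if i: "i \<in> {1..<p}" for i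
  proof -
    have "i \<in> {1..p}" "Suc i \<in> {1..p}" using i by auto
    then have "(\<Sum>j=1..i. t j * d j) = a i" "(\<Sum>j=1..Suc i. t j * d j) = a (Suc i)"
      using sums by blast+
    then have "a (Suc i) = a i + t (Suc i) * d (Suc i)" by simp
    moreover have "d (Suc i) = gcd (a (Suc i)) (d i)"
      unfolding d_def by (rule Gcd_image_atLeastAtMost_Suc)
    moreover have "0 < d (Suc i)" "d (Suc i) dvd d i" using chain i by (auto simp: divisor_chain_def)
    moreover have "d i dvd a i" unfolding d_def using i by auto
    ultimately have "d (Suc i) = d (Suc i) * gcd (d i div d (Suc i)) (t (Suc i))"
      using gcd_add_mult_dvd_chain by metis
    with \<open>0 < d (Suc i)\<close> show ?thesis by simp
  qed
  moreover have "gen_seq d t k = a k" if "k \<in> {1..p}" for k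
    using that sums by (auto simp: gen_seq_def d_def)
  then have "X = gen_set p d t" using X gen_set_eq_image[OF assms(3)] by auto
  moreover have "d p = Gcd X" using X by (simp add: d_def)
  moreover have "(\<Sum>i=1..p. t i * d i) \<in> X" using sums X assms(3) by auto
  ultimately show ?thesis using that chain t by blast
qed

lemma card_gen_set:
  assumes "divisor_chain p d" "\<forall>i\<in>{1..p}. 0 < t i" "0 < p"
  shows "card (gen_set p d t) = p"
  using strict_mono_on_imp_inj_on[OF strict_mono_on_gen_seq[OF assms(1,2)]]
  by (simp add: gen_set_eq_image[OF assms(3)] card_image)

lemma Sat_set_gen_set:
  assumes seq: "Sat_sequence F p d" and t: "\<forall>i\<in>{1..p}. 0 < t i"
    and sum: "(\<Sum>i=1..p. t i * d i) < F"
    and coprime: "\<forall>i\<in>{1..<p}. gcd (d i div d (Suc i)) (t (Suc i)) = 1"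
  shows "Sat_set F (gen_set p d t)"
proof -
  have p: "1 \<le> p" and chain: "divisor_chain p d" and "\<not> d p dvd F"
    using seq by (simp_all add: Sat_sequence_iff)
  have mono: "strict_mono_on {1..p} (gen_seq d t)" by (rule strict_mono_on_gen_seq[OF chain t])
  have "0 < gen_seq d t k \<and> gen_seq d t k < F" if k: "k \<in> {1..p}" for k
  proof
    have "gen_seq d t 1 \<le> gen_seq d t k" using k p by (intro strict_mono_on_leD[OF mono]) auto
    moreover have "0 < gen_seq d t 1" using chain p by (simp add: gen_seq_def divisor_chain_def)
    ultimately show "0 < gen_seq d t k" by linarith
    have "gen_seq d t k \<le> (\<Sum>i=1..k. t i * d i)" using k p t by (intro gen_seq_le_sum) auto
    also have "\<dots> \<le> (\<Sum>i=1..p. t i * d i)" using k by (intro sum_mono2) auto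
    finally show "gen_seq d t k < F" using sum by linarith
  qed
  moreover have "Gcd (gen_set p d t) = d p"
    using Gcd_gen_seq[OF chain coprime] p by (simp add: gen_set_eq_image)
  ultimately show ?thesis
    using \<open>\<not> d p dvd F\<close> p by (auto simp: Sat_set_iff gen_set_eq_image)
qed

lemma Sat_min_system_gen_set:
  assumes seq: "Sat_sequence F p d" and t: "\<forall>i\<in>{1..p}. 0 < t i"
    and sum: "(\<Sum>i=1..p. t i * d i) < F"
    and coprime: "\<forall>i\<in>{1..<p}. gcd (d i div d (Suc i)) (t (Suc i)) = 1"
  shows "Sat_hull F (gen_set p d t) \<in> Sat F"
    and "Sat_min_system F (gen_set p d t) (Sat_hull F (gen_set p d t))"
    and "Sat_rank F (Sat_hull F (gen_set p d t)) = p"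
proof -
  have chain: "divisor_chain p d" and "0 < p" using seq by (simp_all add: Sat_sequence_iff)
  have X: "Sat_set F (gen_set p d t)" using Sat_set_gen_set[OF seq t sum coprime] .
  then show "Sat_hull F (gen_set p d t) \<in> Sat F" by (rule Sat_hull_in_Sat_if_Sat_set)
  show min: "Sat_min_system F (gen_set p d t) (Sat_hull F (gen_set p d t))"
    using X gcd_independent_gen_set[OF chain t coprime \<open>0 < p\<close>] by (simp add: Sat_min_system_iff)
  show "Sat_rank F (Sat_hull F (gen_set p d t)) = p"
    using Sat_rank_eq_card[OF min] card_gen_set[OF chain t \<open>0 < p\<close>] by simp
qed

lemma Sat_min_system_obtain_gen_set:
  assumes min: "Sat_min_system F X S" and rank: "Sat_rank F S = p" and "0 < p"
  obtains d t where "Sat_sequence F p d" "\<forall>i\<in>{1..p}. 0 < t i" "(\<Sum>i=1..p. t i * d i) < F"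
    and "\<forall>i\<in>{1..<p}. gcd (d i div d (Suc i)) (t (Suc i)) = 1" "X = gen_set p d t"
proof -
  have X: "Sat_set F X" and ind: "gcd_independent X" using min by (simp_all add: Sat_min_system_iff)
  then have bounds: "\<forall>x\<in>X. 0 < x \<and> x < F" and "\<not> Gcd X dvd F" by (simp_all add: Sat_set_iff)
  have "finite X" using bounds by (intro finite_subset[of X "{..<F}"]) auto
  moreover have "card X = p" using Sat_rank_eq_card[OF min] rank by simp
  ultimately obtain d t where chain: "divisor_chain p d" and "\<forall>i\<in>{1..p}. 0 < t i"
    and "\<forall>i\<in>{1..<p}. gcd (d i div d (Suc i)) (t (Suc i)) = 1"
    and "X = gen_set p d t" "d p = Gcd X" "(\<Sum>i=1..p. t i * d i) \<in> X"
    using gcd_independent_obtain_gen_set \<open>0 < p\<close> bounds ind by blast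
  moreover have "Sat_sequence F p d"
    using chain \<open>0 < p\<close> \<open>\<not> Gcd X dvd F\<close> \<open>d p = Gcd X\<close> by (simp add: Sat_sequence_iff)
  ultimately show ?thesis using that bounds by blast
qed

theorem theorem49:
  fixes F p :: nat
  assumes "F > 0" and "p > 0"
  shows "(\<forall>d t. Sat_sequence F p d \<and> (\<forall>i\<in>{1..p}. t i > 0) \<and>
            (\<Sum>i=1..p. t i * d i) < F \<and>
            (\<forall>i\<in>{1..<p}. gcd (d i div d (Suc i)) (t (Suc i)) = 1)
          \<longrightarrow> (\<exists>S\<in>Sat F. Sat_min_system F (gen_set p d t) S \<and> Sat_rank F S = p))
       \<and> (\<forall>S\<in>Sat F. \<forall>X. Sat_min_system F X S \<and> Sat_rank F S = p \<longrightarrow>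
          (\<exists>d t. Sat_sequence F p d \<and> (\<forall>i\<in>{1..p}. t i > 0) \<and>
            (\<Sum>i=1..p. t i * d i) < F \<and>
            (\<forall>i\<in>{1..<p}. gcd (d i div d (Suc i)) (t (Suc i)) = 1) \<and>
            X = gen_set p d t))"
proof (intro conjI allI impI ballI; elim conjE)
  fix d t
  assume "Sat_sequence F p d" "\<forall>i\<in>{1..p}. t i > 0" "(\<Sum>i=1..p. t i * d i) < F"
    "\<forall>i\<in>{1..<p}. gcd (d i div d (Suc i)) (t (Suc i)) = 1"
  from Sat_min_system_gen_set[OF this]
  show "\<exists>S\<in>Sat F. Sat_min_system F (gen_set p d t) S \<and> Sat_rank F S = p" by blast
next
  fix S X assume "Sat_min_system F X S" "Sat_rank F S = p"
  from Sat_min_system_obtain_gen_set[OF this \<open>p > 0\<close>]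
  show "\<exists>d t. Sat_sequence F p d \<and> (\<forall>i\<in>{1..p}. t i > 0) \<and>
      (\<Sum>i=1..p. t i * d i) < F \<and> (\<forall>i\<in>{1..<p}. gcd (d i div d (Suc i)) (t (Suc i)) = 1) \<and>
      X = gen_set p d t"
    by blast
qed

end
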